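(* Let $b\ge1$ and let $G$ be an extended gadget of type II with vertices $p,q,r$ and directed paths $P_1,P_2$ as in its definition. Then: (1) for every $x\in V(G)\setminus\{p,q\}$ there exist $a\in\{1,2\}$ and an $(a,b)$-alternating-path $R$ contained in $G$ with $t_a(R)=x$, $s_1(R)\in\{p,q\}$ and $|V(R)\cap\{p,q\}|=1$; (2) for every non-empty set $X\subseteq V(P_1)\setminus\{p,r\}$ there exist $a\in\{1,2\}$ and an $(a,b)$-alternating-path $R$ contained in $G$ with $t_a(R)\in X$, $s_1(R)\in\{p,q\}$ and $|V(R)\cap\{p,q\}|=|V(R)\cap X|=1$.
   Context: Fix an integer $b\ge1$. A basic gadget of type II is a digraph consisting of vertices $p,q,r$ and a directed path $P_1$ from $r$ to $p$ of length at least $2b^2+b-2$ with $q\notin V(P_1)$, such that every vertex of $P_1$ has an arc to $q$. An extended gadget of type II consists of such a basic gadget together with a directed path $P_2$ of length at least $b$ whose last vertex is $r$, with $V(P_1)\cap V(P_2)=\{r\}$, $q\notin V(P_2)$, and such that either there is an arc from the first vertex of $P_2$ to the second vertex of $P_1$, or there is an arc from some vertex of $V(P_1)\setminus\{r\}$ to the first vertex of $P_2$. For integers $a,b\ge1$, an $(a,b)$-alternating-path is an oriented path $R$ consisting of vertices $s_1,\dots,s_a,t_1,\dots,t_a$ and pairwise internally vertex-disjoint directed paths $Q_1,\dots,Q_a,Q'_1,\dots,Q'_{a-1}$, where $Q_i$ goes from $s_i$ to $t_i$, $Q'_i$ goes from $s_{i+1}$ to $t_i$, and $Q_2,\dots,Q_{a-1},Q'_1,\dots,Q'_{a-1}$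 each have length at least $b$ ($Q_1$, $Q_a$ may have length zero). We write $s_i(R),t_i(R)$ for its vertices. *)

theory Defs
  imports Main
begin

definition dpath :: "'a set \<Rightarrow> ('a \<times> 'a) set \<Rightarrow> 'a list \<Rightarrow> bool" where
  "dpath V E P \<equiv> P \<noteq> [] \<and> distinct P \<and> set P \<subseteq> V \<and>
     (\<forall>i. Suc i < length P \<longrightarrow> (P ! i, P ! Suc i) \<in> E)"

definition plen :: "'a list \<Rightarrow> nat" where
  "plen P = length P - 1"

text \<open>The vertex sequence of the oriented path
  s1 Q1 t1 (Q'1 reversed) s2 Q2 t2 ... sa Qa ta.\<close>

definition alt_walk :: "nat \<Rightarrow> (nat \<Rightarrow> 'a list) \<Rightarrow> (nat \<Rightarrow> 'a list) \<Rightarrow> 'a list" where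
  "alt_walk a Q Q' = Q 1 @ concat (map (\<lambda>i. tl (rev (Q' i)) @ tl (Q (Suc i))) [1..<a])"

text \<open>(a,b)-alternating path contained in the digraph (V,E), given by the directed paths
  Q 1..Q a and Q' 1..Q' (a-1); s_i = hd (Q i), t_i = last (Q i). Being an oriented path
  (hence the Q's being pairwise internally vertex-disjoint) is expressed by distinctness of
  the whole vertex sequence.\<close>

definition alt_path :: "'a set \<Rightarrow> ('a \<times> 'a) set \<Rightarrow> nat \<Rightarrow> nat \<Rightarrow>
    (nat \<Rightarrow> 'a list) \<Rightarrow> (nat \<Rightarrow> 'a list) \<Rightarrow> bool" where
  "alt_path V E a b Q Q' \<equiv> 1 \<le> a \<and>
     (\<forall>i\<in>{1..a}. dpath V E (Q i)) \<and>
     (\<forall>i\<in>{1..<a}. dpath V E (Q' i) \<and> hd (Q' i) = hd (Q (Suc i)) \<and>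
                    last (Q' i) = last (Q i) \<and> b \<le> plen (Q' i)) \<and>
     (\<forall>i\<in>{2..<a}. b \<le> plen (Q i)) \<and>
     distinct (alt_walk a Q Q')"

definition basic_gadget2 :: "'a set \<Rightarrow> ('a \<times> 'a) set \<Rightarrow> nat \<Rightarrow> 'a \<Rightarrow> 'a \<Rightarrow> 'a \<Rightarrow> 'a list \<Rightarrow> bool" where
  "basic_gadget2 V E b p q r P1 \<equiv>
     E \<subseteq> V \<times> V \<and> V = set P1 \<union> {q} \<and>
     dpath V E P1 \<and> hd P1 = r \<and> last P1 = p \<and> 2 * b^2 + b - 2 \<le> plen P1 \<and>
     q \<notin> set P1 \<and> (\<forall>v\<in>set P1. (v, q) \<in> E)"

definition ext_gadget2 :: "'a set \<Rightarrow> ('a \<times> 'a) set \<Rightarrow> nat \<Rightarrow> 'a \<Rightarrow> 'a \<Rightarrow> 'a \<Rightarrow> 'a list \<Rightarrow> 'a list \<Rightarrow> bool" where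
  "ext_gadget2 V E b p q r P1 P2 \<equiv>
     E \<subseteq> V \<times> V \<and> V = set P1 \<union> set P2 \<union> {q} \<and>
     basic_gadget2 (set P1 \<union> {q}) (E \<inter> ((set P1 \<union> {q}) \<times> (set P1 \<union> {q}))) b p q r P1 \<and>
     dpath V E P2 \<and> b \<le> plen P2 \<and> last P2 = r \<and> set P1 \<inter> set P2 = {r} \<and> q \<notin> set P2 \<and>
     ((hd P2, P1 ! 1) \<in> E \<or> (\<exists>v\<in>set P1 - {r}. (v, hd P2) \<in> E))"

end

theory Submission
  imports Defs
begin

text \<open>All the alternating paths needed have at most two forward segments. A vertex \<open>x\<close>
  of \<open>P\<^sub>2\<close> is reached from \<open>p\<close> backwards along the directed path that follows
  \<open>P\<^sub>2\<close> from \<open>x\<close> to \<open>r\<close> and then \<open>P\<^sub>1\<close> to \<open>p\<close>; of the length bound on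
  \<open>P\<^sub>1\<close> only \<open>|P\<^sub>1| \<ge> b\<close> is needed for this. For \<open>X\<close> inside \<open>P\<^sub>1\<close> the backward
  segment is \<open>P\<^sub>2\<close> followed by the arc \<open>r \<rightarrow> q\<close>, read from \<open>q\<close>, and the forward
  segment runs along \<open>P\<^sub>1\<close> from the point where \<open>P\<^sub>2\<close> is attached to the first vertex
  of \<open>X\<close>. If instead \<open>P\<^sub>2\<close> is entered by an arc from a vertex \<open>v\<close> of \<open>P\<^sub>1\<close> and
  \<open>X\<close> meets \<open>P\<^sub>1\<close> up to \<open>v\<close>, the backward segment starts at the last such vertex
  of \<open>X\<close> and follows \<open>P\<^sub>1\<close> to \<open>v\<close> first; if \<open>v = p\<close>, then \<open>p\<close>, \<open>P\<^sub>2\<close> and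
  \<open>P\<^sub>1\<close> up to the first vertex of \<open>X\<close> form a single directed path.\<close>

lemma dpath_iff_successively:
  "dpath V E P \<longleftrightarrow> P \<noteq> [] \<and> distinct P \<and> set P \<subseteq> V \<and> successively (\<lambda>x y. (x, y) \<in> E) P"
  by (simp add: dpath_def successively_conv_nth)

lemma dpath_singleton [simp]: "dpath V E [x] \<longleftrightarrow> x \<in> V"
  by (simp add: dpath_def)

lemma dpath_mono: "dpath V E P \<Longrightarrow> V \<subseteq> V' \<Longrightarrow> E \<subseteq> E' \<Longrightarrow> dpath V' E' P"
  by (auto simp: dpath_def)

lemma dpath_append:
  assumes "dpath V E xs" "dpath V E ys" "set xs \<inter> set ys = {}" "(last xs, hd ys) \<in> E"
  shows "dpath V E (xs @ ys)"
  using assms by (auto simp: dpath_iff_successively successively_append_iff)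

lemma dpath_appendD1: "dpath V E (xs @ ys) \<Longrightarrow> xs \<noteq> [] \<Longrightarrow> dpath V E xs"
  by (simp add: dpath_iff_successively successively_append_iff)

lemma dpath_appendD2: "dpath V E (xs @ ys) \<Longrightarrow> ys \<noteq> [] \<Longrightarrow> dpath V E ys"
  by (auto simp: dpath_iff_successively successively_append_iff)

definition has_alt_path :: "'a set \<Rightarrow> ('a \<times> 'a) set \<Rightarrow> nat \<Rightarrow> 'a set \<Rightarrow> 'a set \<Rightarrow> bool" where
  "has_alt_path V E b S X \<longleftrightarrow> (\<exists>a\<in>{1, 2}. \<exists>Q Q'. alt_path V E a b Q Q' \<and>
     last (Q a) \<in> X \<and> hd (Q 1) \<in> S \<and>
     card (set (alt_walk a Q Q') \<inter> S) = 1 \<and> card (set (alt_walk a Q Q') \<inter> X) = 1)"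

lemma has_alt_path_singletonD:
  assumes "has_alt_path V E b S {x}"
  shows "\<exists>a\<in>{1, 2}. \<exists>Q Q'. alt_path V E a b Q Q' \<and>
     last (Q a) = x \<and> hd (Q 1) \<in> S \<and> card (set (alt_walk a Q Q') \<inter> S) = 1"
  using assms unfolding has_alt_path_def by blast

lemma has_alt_path_dpath:
  assumes "dpath V E Q" "set Q \<inter> S = {hd Q}" "set Q \<inter> X = {last Q}"
  shows "has_alt_path V E b S X"
proof -
  have "alt_path V E 1 b (\<lambda>_. Q) Q'" "alt_walk 1 (\<lambda>_. Q) Q' = Q" for Q'
    using assms(1) by (auto simp: alt_path_def alt_walk_def dpath_def)
  then show ?thesis
    using assms unfolding has_alt_path_def by (intro bexI[of _ 1] exI) auto
qed

text \<open>The alternating path \<open>last W\<close>, \<open>W\<close> reversed, \<open>Z\<close>: here \<open>Q\<^sub>1\<close> is the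
  trivial path at \<open>last W\<close>, \<open>Q'\<^sub>1 = W\<close> and \<open>Q\<^sub>2 = Z\<close>.\<close>

lemma has_alt_path_two:
  assumes W: "dpath V E W" and Z: "dpath V E Z" and "b \<le> plen W" "hd W = hd Z"
    and disj: "set W \<inter> set (tl Z) = {}"
    and S: "(set W \<union> set Z) \<inter> S = {last W}" and X: "(set W \<union> set Z) \<inter> X = {last Z}"
  shows "has_alt_path V E b S X"
proof -
  define Q where "Q = (\<lambda>i::nat. if i = 1 then [last W] else Z)"
  have "W \<noteq> []" "Z \<noteq> []" using W Z by (auto simp: dpath_def)
  then have walk: "alt_walk 2 Q (\<lambda>_. W) = rev W @ tl Z"
    by (simp add: alt_walk_def Q_def numeral_2_eq_2 hd_rev[symmetric])
  have sets: "set (rev W @ tl Z) = set W \<union> set Z"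
    using \<open>hd W = hd Z\<close> \<open>W \<noteq> []\<close> \<open>Z \<noteq> []\<close> by (cases Z) auto
  have "{1..(2::nat)} = {1, 2}" "{1..<(2::nat)} = {1}" "{2..<(2::nat)} = {}" by auto
  then have "alt_path V E 2 b Q (\<lambda>_. W)"
    unfolding alt_path_def walk using assms \<open>W \<noteq> []\<close>
    by (auto simp: Q_def dpath_def distinct_tl)
  then show ?thesis
    unfolding has_alt_path_def using S X walk sets by (intro bexI[of _ 2] exI) (auto simp: Q_def)
qed

locale type2_gadget =
  fixes V :: "'a set" and E :: "('a \<times> 'a) set" and b :: nat and p q r :: 'a
    and T P2 :: "'a list"
  assumes V_eq: "V = insert q (set T \<union> set P2)"
    and dpath_P1: "dpath V E (r # T)" and T_nonempty: "T \<noteq> []" and last_T: "last T = p"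
    and T_long: "b \<le> length T"
    and dpath_P2: "dpath V E P2" and last_P2: "last P2 = r" and P2_long: "b < length P2"
    and T_P2_disjoint: "set T \<inter> set P2 = {}"
    and q_notin_P1: "q \<notin> set (r # T)" and q_notin_P2: "q \<notin> set P2"
    and arc_to_q: "\<And>v. v \<in> set (r # T) \<Longrightarrow> (v, q) \<in> E"
    and P2_linked: "(hd P2, hd T) \<in> E \<or> (\<exists>v\<in>set T. (v, hd P2) \<in> E)"
begin

lemma P2_nonempty: "P2 \<noteq> []"
  using dpath_P2 by (simp add: dpath_def)

lemma hd_P2_in_V: "hd P2 \<in> V"
  using P2_nonempty V_eq by auto

lemma distinct_T: "distinct T"
  using dpath_P1 by (simp add: dpath_def)

lemma T_subset_V: "set T \<subseteq> V"
  using V_eq by auto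

lemma dpath_T_segment:
  assumes "T = A @ B @ C" "B \<noteq> []"
  shows "dpath V E B"
proof -
  have "dpath V E (((r # A) @ B) @ C)"
    using dpath_P1 assms(1) by simp
  then have "dpath V E ((r # A) @ B)"
    by (rule dpath_appendD1) (use assms(2) in simp)
  then show ?thesis
    using assms(2) by (rule dpath_appendD2)
qed

lemma dpath_T: "dpath V E T"
  using dpath_T_segment[of "[]" T "[]"] T_nonempty by simp

lemma p_in_suffix:
  assumes "T = A @ x # B" "x \<noteq> p"
  shows "p \<in> set B"
proof -
  have "B \<noteq> []" using assms last_T by auto
  then show ?thesis using assms last_T last_in_set[of B] by simp
qed

lemma dpath_P2_q: "dpath V E (P2 @ [q])"
  by (rule dpath_append) (use dpath_P2 q_notin_P2 arc_to_q last_P2 V_eq in auto)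

lemma plen_P2_q: "b \<le> plen (P2 @ [q])"
  using P2_long by (simp add: plen_def)

lemma p_in_T: "p \<in> set T" and p_notin_P2: "p \<notin> set P2"
  using T_nonempty last_T T_P2_disjoint last_in_set[of T] by auto

lemma arc_r_hd_T: "(r, hd T) \<in> E"
  using dpath_P1 T_nonempty by (cases T) (auto simp: dpath_def)

lemma T_split_at_first:
  assumes X: "X \<subseteq> set T - {p}" and T: "T = C @ D" and D: "set D \<inter> X \<noteq> {}"
  obtains A x B where "T = C @ A @ x # B" "x \<in> X" "set A \<inter> X = {}" "p \<notin> set (C @ A @ [x])"
proof -
  obtain A x B where D: "D = A @ x # B" and x: "x \<in> X" and A: "\<forall>y\<in>set A. y \<notin> X"
    using split_list_first_propE[of D "\<lambda>y. y \<in> X"] D by blast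
  have "p \<in> set B"
    using p_in_suffix[of "C @ A"] T D x X by auto
  then have "p \<notin> set (C @ A @ [x])"
    using distinct_T T D by auto
  then show thesis
    using that T D x A by blast
qed

lemma T_prefix_to_first:
  assumes X: "X \<subseteq> set T - {p}" "X \<noteq> {}"
  obtains A x B where "T = A @ x # B" "x \<in> X" "set A \<inter> X = {}" "p \<notin> set (A @ [x])"
    "dpath V E (A @ [x])" "hd (A @ [x]) = hd T"
proof -
  obtain A x B where T: "T = A @ x # B" and "x \<in> X" "set A \<inter> X = {}" "p \<notin> set (A @ [x])"
  proof (rule T_split_at_first[of X "[]" T])
    show "set T \<inter> X \<noteq> {}" using X by auto
  qed (use X in auto)
  moreover have "dpath V E (A @ [x])"
    using dpath_T_segment[of "[]" "A @ [x]" B] T by simp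
  moreover have "hd (A @ [x]) = hd T"
    using T by (cases A) auto
  ultimately show thesis
    using that by blast
qed

lemma has_alt_path_arc_P2_T:
  assumes arc: "(hd P2, hd T) \<in> E" and X: "X \<subseteq> set T - {p}" "X \<noteq> {}"
  shows "has_alt_path V E b {p, q} X"
proof -
  obtain A x B where T: "T = A @ x # B" and x: "x \<in> X" and A: "set A \<inter> X = {}"
    and p: "p \<notin> set (A @ [x])" and seg: "dpath V E (A @ [x])" and hd_seg: "hd (A @ [x]) = hd T"
    using T_prefix_to_first X by blast
  have Z: "dpath V E ([hd P2] @ A @ [x])"
    by (rule dpath_append) (use seg hd_seg hd_P2_in_V arc T T_P2_disjoint P2_nonempty in auto)
  show ?thesis
  proof (rule has_alt_path_two[OF dpath_P2_q Z plen_P2_q])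
    show "set (P2 @ [q]) \<inter> set (tl ([hd P2] @ A @ [x])) = {}"
      using T T_P2_disjoint q_notin_P1 by auto
    show "(set (P2 @ [q]) \<union> set ([hd P2] @ A @ [x])) \<inter> {p, q} = {last (P2 @ [q])}"
      using p p_notin_P2 P2_nonempty by auto
    show "(set (P2 @ [q]) \<union> set ([hd P2] @ A @ [x])) \<inter> X = {last ([hd P2] @ A @ [x])}"
      using x A X T_P2_disjoint P2_nonempty q_notin_P1 by auto
  qed (use P2_nonempty in simp)
qed

lemma has_alt_path_arc_p_P2:
  assumes arc: "(p, hd P2) \<in> E" and X: "X \<subseteq> set T - {p}" "X \<noteq> {}"
  shows "has_alt_path V E b {p, q} X"
proof -
  obtain A x B where T: "T = A @ x # B" and x: "x \<in> X" and A: "set A \<inter> X = {}"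
    and p: "p \<notin> set (A @ [x])" and seg: "dpath V E (A @ [x])" and hd_seg: "hd (A @ [x]) = hd T"
    using T_prefix_to_first X by blast
  have P2_seg: "dpath V E (P2 @ A @ [x])"
    by (rule dpath_append) (use seg hd_seg dpath_P2 last_P2 arc_r_hd_T T T_P2_disjoint in auto)
  have Q: "dpath V E ([p] @ P2 @ A @ [x])"
    by (rule dpath_append) (use P2_seg arc p p_notin_P2 p_in_T V_eq P2_nonempty in auto)
  show ?thesis
  proof (rule has_alt_path_dpath[OF Q])
    show "set ([p] @ P2 @ A @ [x]) \<inter> {p, q} = {hd ([p] @ P2 @ A @ [x])}"
      using q_notin_P1 q_notin_P2 T by auto
    show "set ([p] @ P2 @ A @ [x]) \<inter> X = {last ([p] @ P2 @ A @ [x])}"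
      using x A X T_P2_disjoint by auto
  qed
qed

lemma has_alt_path_arc_T_P2_before:
  assumes arc: "(v, hd P2) \<in> E" and T: "T = C @ v # D" and "v \<noteq> p"
    and X: "X \<subseteq> set T - {p}" and CX: "set (C @ [v]) \<inter> X \<noteq> {}"
  shows "has_alt_path V E b {p, q} X"
proof -
  obtain A x B where Cv: "C @ [v] = A @ x # B" and x: "x \<in> X" and B: "\<forall>y\<in>set B. y \<notin> X"
    using split_list_last_propE[of "C @ [v]" "\<lambda>y. y \<in> X"] CX by blast
  have T': "T = A @ (x # B) @ D"
    using T Cv by simp
  have last_xB: "last (x # B) = v"
    using Cv by (metis last_appendR last_snoc list.distinct(1))
  have "p \<in> set D"
    using p_in_suffix T \<open>v \<noteq> p\<close> by blast
  then have p: "p \<notin> set (x # B)"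
    using distinct_T T' by auto
  have seg: "dpath V E (x # B)"
    using dpath_T_segment T' by blast
  have W: "dpath V E ((x # B) @ P2 @ [q])"
    by (rule dpath_append) (use seg last_xB arc dpath_P2_q P2_nonempty T' T_P2_disjoint q_notin_P1 in auto)
  show ?thesis
  proof (rule has_alt_path_two[OF W, of "[x]"])
    show "dpath V E [x]"
      using T' V_eq by auto
    show "b \<le> plen ((x # B) @ P2 @ [q])"
      using P2_long by (simp add: plen_def)
    show "(set ((x # B) @ P2 @ [q]) \<union> set [x]) \<inter> {p, q} = {last ((x # B) @ P2 @ [q])}"
      using p p_notin_P2 by auto
    show "(set ((x # B) @ P2 @ [q]) \<union> set [x]) \<inter> X = {last [x]}"
      using x B X T_P2_disjoint q_notin_P1 by auto
  qed simp_all
qed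

lemma has_alt_path_arc_T_P2_after:
  assumes arc: "(v, hd P2) \<in> E" and T: "T = C @ v # D"
    and X: "X \<subseteq> set T - {p}" "X \<noteq> {}" and CX: "set (C @ [v]) \<inter> X = {}"
  shows "has_alt_path V E b {p, q} X"
proof -
  have "set D \<inter> X \<noteq> {}"
    using X CX T by auto
  then obtain A x B where T': "T = (C @ [v]) @ A @ x # B" and x: "x \<in> X"
    and A: "set A \<inter> X = {}" and p: "p \<notin> set ((C @ [v]) @ A @ [x])"
    using T_split_at_first[of X "C @ [v]" D] X T by auto
  have Z: "dpath V E (v # A @ [x])"
    using dpath_T_segment[of C "v # A @ [x]" B] T' by simp
  have v: "v \<notin> set (A @ [x])"
    using distinct_T T' by auto
  have W: "dpath V E ([v] @ P2 @ [q])"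
    by (rule dpath_append) (use arc dpath_P2_q P2_nonempty T T_P2_disjoint q_notin_P1 T_subset_V in auto)
  show ?thesis
  proof (rule has_alt_path_two[OF W Z])
    show "b \<le> plen ([v] @ P2 @ [q])"
      using P2_long by (simp add: plen_def)
    show "set ([v] @ P2 @ [q]) \<inter> set (tl (v # A @ [x])) = {}"
      using v T' T_P2_disjoint q_notin_P1 by auto
    show "(set ([v] @ P2 @ [q]) \<union> set (v # A @ [x])) \<inter> {p, q} = {last ([v] @ P2 @ [q])}"
      using p p_notin_P2 by auto
    show "(set ([v] @ P2 @ [q]) \<union> set (v # A @ [x])) \<inter> X = {last (v # A @ [x])}"
      using x A X CX T_P2_disjoint q_notin_P1 by auto
  qed simp
qed

lemma has_alt_path_to_T:
  assumes "X \<subseteq> set T - {p}" "X \<noteq> {}"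
  shows "has_alt_path V E b {p, q} X"
proof (cases "(hd P2, hd T) \<in> E")
  case True
  then show ?thesis
    using has_alt_path_arc_P2_T assms by blast
next
  case False
  then obtain v where v: "v \<in> set T" and arc: "(v, hd P2) \<in> E"
    using P2_linked by blast
  then obtain C D where T: "T = C @ v # D"
    by (meson split_list)
  consider "v = p" | "v \<noteq> p" "set (C @ [v]) \<inter> X \<noteq> {}" | "set (C @ [v]) \<inter> X = {}"
    by blast
  then show ?thesis
  proof cases
    case 1
    then show ?thesis
      using has_alt_path_arc_p_P2 arc assms by blast
  next
    case 2
    then show ?thesis
      using has_alt_path_arc_T_P2_before arc T assms by blast
  next
    case 3
    then show ?thesis
      using has_alt_path_arc_T_P2_after arc T assms by blast
  qed
qed

lemma has_alt_path_to_P2: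
  assumes "x \<in> set P2"
  shows "has_alt_path V E b {p, q} {x}"
proof -
  obtain A B where P2: "P2 = A @ x # B"
    using assms by (meson split_list)
  have seg: "dpath V E (x # B)"
    using dpath_P2 P2 by (auto dest: dpath_appendD2)
  have last_xB: "last (x # B) = r"
    using last_P2 P2 by simp
  have W: "dpath V E ((x # B) @ T)"
    by (rule dpath_append) (use seg last_xB arc_r_hd_T dpath_T P2 T_P2_disjoint in auto)
  show ?thesis
  proof (rule has_alt_path_two[OF W, of "[x]"])
    show "dpath V E [x]"
      using P2 V_eq by auto
    show "b \<le> plen ((x # B) @ T)"
      using T_long by (simp add: plen_def)
    show "(set ((x # B) @ T) \<union> set [x]) \<inter> {p, q} = {last ((x # B) @ T)}"
      using P2 p_in_T last_T T_nonempty q_notin_P1 q_notin_P2 by auto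
  qed auto
qed

lemma has_alt_path_to_vertex:
  assumes "x \<in> V - {p, q}"
  shows "has_alt_path V E b {p, q} {x}"
proof (cases "x \<in> set T")
  case True
  then show ?thesis
    using has_alt_path_to_T[of "{x}"] assms by blast
next
  case False
  then show ?thesis
    using has_alt_path_to_P2 assms V_eq by blast
qed

end

lemma ext_gadget2_type2_gadget:
  assumes "1 \<le> b" and G: "ext_gadget2 V E b p q r P1 P2"
  obtains T where "P1 = r # T" "type2_gadget V E b p q r T P2"
proof -
  define V1 where "V1 = set P1 \<union> {q}"
  define E1 where "E1 = E \<inter> (V1 \<times> V1)"
  have V: "V = set P1 \<union> set P2 \<union> {q}" and B: "basic_gadget2 V1 E1 b p q r P1"
    and P2: "dpath V E P2" "b \<le> plen P2" "last P2 = r" "set P1 \<inter> set P2 = {r}" "q \<notin> set P2"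
    and link: "(hd P2, P1 ! 1) \<in> E \<or> (\<exists>v\<in>set P1 - {r}. (v, hd P2) \<in> E)"
    using G unfolding ext_gadget2_def V1_def E1_def by auto
  have P1: "dpath V1 E1 P1" "hd P1 = r" "last P1 = p" "2 * b^2 + b - 2 \<le> plen P1"
    "q \<notin> set P1" "\<forall>v\<in>set P1. (v, q) \<in> E1"
    using B unfolding basic_gadget2_def by blast+
  define T where "T = tl P1"
  have "P1 \<noteq> []"
    using P1(1) by (simp add: dpath_def)
  then have P1_eq: "P1 = r # T"
    using P1(2) unfolding T_def by (metis list.collapse)
  have "b \<le> 2 * b^2 + b - 2"
    using \<open>1 \<le> b\<close> one_le_power[of b 2] by linarith
  then have T_long: "b \<le> length T"
    using P1(4) P1_eq by (simp add: plen_def)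
  have "P2 \<noteq> []"
    using P2(1) by (simp add: dpath_def)
  have "dpath V E P1"
    by (rule dpath_mono[OF P1(1)]) (auto simp: V V1_def E1_def)
  then have dpath_P1: "dpath V E (r # T)"
    using P1_eq by simp
  have "type2_gadget V E b p q r T P2"
  proof
    show "T \<noteq> []"
      using T_long \<open>1 \<le> b\<close> by auto
    then show "last T = p"
      using P1(3) P1_eq by simp
    show "set T \<inter> set P2 = {}"
      using P2(4) dpath_P1 P1_eq by (auto simp: dpath_def)
    show "V = insert q (set T \<union> set P2)"
      using V P1_eq P2(3) \<open>P2 \<noteq> []\<close> by auto
    show "b < length P2"
      using P2(2) \<open>P2 \<noteq> []\<close> \<open>1 \<le> b\<close> by (simp add: plen_def)
    show "(v, q) \<in> E" if "v \<in> set (r # T)" for v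
      using P1(6) P1_eq that unfolding E1_def by blast
    show "(hd P2, hd T) \<in> E \<or> (\<exists>v\<in>set T. (v, hd P2) \<in> E)"
      using link P1_eq dpath_P1 \<open>T \<noteq> []\<close> by (auto simp: dpath_def hd_conv_nth)
    show "q \<notin> set (r # T)"
      using P1(5) P1_eq by simp
  qed (fact dpath_P1 T_long P2(1,3,5))+
  with P1_eq show thesis
    by (rule that)
qed

theorem lemma2p5:
  fixes V :: "'a set" and E :: "('a \<times> 'a) set" and b :: nat and p q r :: 'a
    and P1 P2 :: "'a list"
  assumes "1 \<le> b"
    and "ext_gadget2 V E b p q r P1 P2"
  shows "(\<forall>x\<in>V - {p, q}. \<exists>a\<in>{1, 2}. \<exists>Q Q'. alt_path V E a b Q Q' \<and>
            last (Q a) = x \<and> hd (Q 1) \<in> {p, q} \<and>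
            card (set (alt_walk a Q Q') \<inter> {p, q}) = 1)
       \<and> (\<forall>X. X \<noteq> {} \<and> X \<subseteq> set P1 - {p, r} \<longrightarrow>
            (\<exists>a\<in>{1, 2}. \<exists>Q Q'. alt_path V E a b Q Q' \<and>
            last (Q a) \<in> X \<and> hd (Q 1) \<in> {p, q} \<and>
            card (set (alt_walk a Q Q') \<inter> {p, q}) = 1 \<and>
            card (set (alt_walk a Q Q') \<inter> X) = 1))"
proof -
  obtain T where P1: "P1 = r # T" and G: "type2_gadget V E b p q r T P2"
    using assms by (rule ext_gadget2_type2_gadget)
  interpret type2_gadget V E b p q r T P2
    by (fact G)
  show ?thesis
    apply (intro conjI ballI allI impI)
    subgoal for x
      by (intro has_alt_path_singletonD has_alt_path_to_vertex)
    subgoal for X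
      unfolding has_alt_path_def[symmetric] using P1 by (intro has_alt_path_to_T) auto
    done
qed

end
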